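(* Let $m\ge2$, $C=C_{2m}(1,1)=J_{2m}+E_{m-1,m+1}-E_{m,m+2}$, $P_m(x)=U_m(x)-U_{m-1}(x)-U_{m-2}(x)$, and let $\lambda_m$ be the largest root of $P_m$. Then $\lambda_m$ is the largest eigenvalue of each of $H_C(0)=\operatorname{Re}C$, $H_C(-\pi/4)=\operatorname{Re}(e^{i\pi/4}C)$ and $H_C(-\pi/2)=\operatorname{Re}(iC)$, and corresponding eigenvectors $v_0, v_{\pi/4}, v_{\pi/2}\in\mathbb{C}^{2m}$ (for $H_C(0)$, $H_C(-\pi/4)$, $H_C(-\pi/2)$ respectively) are given as follows, writing $U_r=U_r(\lambda_m)$: (i) $v_0(k)=U_{k-1}$ for $1\le k\le m-1$; $v_0(k)=\frac12U_{m-1}$ for $k=m,m+1$; $v_0(k)=0$ for $m+2\le k\le2m$. (ii) With $\eta=e^{-i\pi/4}$, $\alpha=\frac1{1+\eta}$, $q=\frac{1-\bar\eta}{1+\eta}=(\sqrt2-1)e^{-i\pi/4}$: $v_{\pi/4}(k)=\eta^{k-1}U_{k-1}$ for $1\le k\le m-1$; $v_{\pi/4}(k)=\eta^{k-1}\alpha U_{m-1}$ for $k=m,m+1$; $v_{\pi/4}(k)=\eta^{k-1}qU_{2m-k}$ for $m+2\le k\le2m$. (iii) With $\beta=\frac{1+i}{2}$: $v_{\pi/2}(k)=(-i)^{k-1}U_{k-1}$ for $1\le k\le m-1$; $v_{\pi/2}(k)=(-i)^{k-1}\beta U_{m-1}$ for $k=m,m+1$; $v_{\pi/2}(k)=(-i)^{k-1}U_{2m-k}$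 for $m+2\le k\le2m$.
   Context: $J_n$ is the $n\times n$ nilpotent Jordan block (ones on the first superdiagonal); $E_{a,b}$ is the matrix unit with $1$ in position $(a,b)$. $H_X(\theta)=\frac12(e^{-i\theta}X+e^{i\theta}X^* )$ and $\operatorname{Re}Y=\frac12(Y+Y^* )$. $U_k$ are Chebyshev polynomials of the second kind: $U_{-1}=0$, $U_0=1$, $U_{k+1}(u)=2uU_k(u)-U_{k-1}(u)$. *)

theory Defs
  imports Complex_Main "Jordan_Normal_Form.Matrix" "Jordan_Normal_Form.Char_Poly"
begin

fun chebU :: "nat \<Rightarrow> real \<Rightarrow> real" where
  "chebU 0 u = 1"
| "chebU (Suc 0) u = 2 * u"
| "chebU (Suc (Suc k)) u = 2 * u * chebU (Suc k) u - chebU k u"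

definition P_poly :: "nat \<Rightarrow> real \<Rightarrow> real" where
  "P_poly m x = chebU m x - chebU (m - 1) x - chebU (m - 2) x"

definition J_mat :: "nat \<Rightarrow> complex mat" where
  "J_mat n = mat n n (\<lambda>(i, j). if j = i + 1 then 1 else 0)"

text \<open>Matrix unit E_(a,b) of size n, with 1-based indices a, b.\<close>
definition E_unit :: "nat \<Rightarrow> nat \<Rightarrow> nat \<Rightarrow> complex mat" where
  "E_unit n a b = mat n n (\<lambda>(i, j). if i + 1 = a \<and> j + 1 = b then 1 else 0)"

definition C_mat :: "nat \<Rightarrow> complex mat" where
  "C_mat m = J_mat (2*m) + E_unit (2*m) (m - 1) (m + 1) - E_unit (2*m) m (m + 2)"

definition ctrans :: "complex mat \<Rightarrow> complex mat" where
  "ctrans X = mat (dim_col X) (dim_row X) (\<lambda>(i, j). cnj (X $$ (j, i)))"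

definition H_mat :: "complex mat \<Rightarrow> real \<Rightarrow> complex mat" where
  "H_mat X \<theta> = (1/2 :: complex) \<cdot>\<^sub>m
     (exp (- \<i> * complex_of_real \<theta>) \<cdot>\<^sub>m X + exp (\<i> * complex_of_real \<theta>) \<cdot>\<^sub>m ctrans X)"

text \<open>Vector of length n from a 1-indexed coordinate function.\<close>
definition vec1 :: "nat \<Rightarrow> (nat \<Rightarrow> complex) \<Rightarrow> complex vec" where
  "vec1 n f = vec n (\<lambda>i. f (i + 1))"

definition largest_eigenvalue :: "complex mat \<Rightarrow> complex \<Rightarrow> bool" where
  "largest_eigenvalue H \<mu> \<longleftrightarrow> eigenvalue H \<mu> \<and>
     (\<forall>\<nu>. eigenvalue H \<nu> \<longrightarrow> \<nu> \<in> \<real> \<and> Re \<nu> \<le> Re \<mu>)"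

end

theory Submission
  imports Defs
begin

text \<open>
  The eigenvectors are Chebyshev vectors twisted by a phase. For \<open>\<eta> = e\<^sup>i\<^sup>\<theta>\<close> and a vector with
  coordinates \<open>\<eta>\<^sup>k g(k)\<close>, the eigen-equation of \<open>H\<^sub>C(\<theta>)\<close> reduces, away from the rows
  touched by the perturbation, to the recurrence \<open>U\<^sub>k\<^sub>+\<^sub>1 = 2\<lambda> U\<^sub>k - U\<^sub>k\<^sub>-\<^sub>1\<close> (read
  from the left end on the first half and from the right end on the second); on the four
  perturbed rows it reduces, thanks to the choice of \<open>\<alpha>\<close> and \<open>q\<close>, to
  \<open>(2\<lambda> - 1) U\<^sub>m\<^sub>-\<^sub>1 = 2 U\<^sub>m\<^sub>-\<^sub>2\<close>, which is \<open>P\<^sub>m(\<lambda>) = 0\<close>.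

  Maximality holds for every \<open>\<theta>\<close> at once: the Rayleigh quotient of \<open>H\<^sub>C(\<theta>)\<close> is
  \<open>Re (e\<^sup>-\<^sup>i\<^sup>\<theta> x\<^sup>* C x)\<close>, and \<open>|x\<^sup>* C x| \<le> \<lambda> |x|\<^sup>2\<close> by completing squares: along
  the two path-like ends with the weights \<open>U\<^sub>j\<^sub>+\<^sub>1 / (2 U\<^sub>j)\<close>, and on the four middle
  coordinates by an explicit sum of squares. This needs \<open>\<lambda> \<ge> 1\<close>, which holds because
  \<open>P\<^sub>m(1) = 2 - m \<le> 0 \<le> P\<^sub>m(2)\<close>.
\<close>

section \<open>Chebyshev polynomials and the largest root of \<open>P\<^sub>m\<close>\<close>

lemma chebU_ge_1_mono:
  assumes "u \<ge> 1"
  shows "1 \<le> chebU k u \<and> chebU k u \<le> chebU (Suc k) u"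
proof (induction k)
  case 0
  then show ?case using assms by simp
next
  case (Suc k)
  have "chebU (Suc k) u \<le> (2 * u - 1) * chebU (Suc k) u"
    using Suc assms by (simp add: mult_right_mono[of 1 "2 * u - 1", simplified])
  moreover have "chebU (Suc (Suc k)) u = (2 * u - 1) * chebU (Suc k) u + chebU (Suc k) u - chebU k u"
    by (simp add: algebra_simps)
  ultimately show ?case using Suc by linarith
qed

lemma chebU_pos: "u \<ge> 1 \<Longrightarrow> chebU k u > 0"
  using chebU_ge_1_mono[of u k] by linarith

lemma isCont_chebU: "isCont (chebU k) x"
proof -
  have "isCont (chebU k) x \<and> isCont (chebU (Suc k)) x"
  proof (induction k)
    case (Suc k)
    then have "isCont (\<lambda>u. 2 * u * chebU (Suc k) u - chebU k u) x"
      by (intro continuous_intros) auto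
    then show ?case using Suc by simp
  qed simp
  then show ?thesis ..
qed

lemma chebU_at_1: "chebU k 1 = real k + 1"
  by (induction k "1::real" rule: chebU.induct) simp_all

lemma P_poly_eq_0_iff:
  assumes "m \<ge> 2"
  shows "P_poly m x = 0 \<longleftrightarrow> (2 * x - 1) * chebU (m - 1) x = 2 * chebU (m - 2) x"
proof -
  obtain k where "m = k + 2" using assms by (metis add.commute le_Suc_ex)
  then show ?thesis by (simp add: P_poly_def algebra_simps)
qed

lemma P_poly_largest_root_ge_1:
  assumes "m \<ge> 2" and largest: "\<forall>x. P_poly m x = 0 \<longrightarrow> x \<le> lam"
  shows "lam \<ge> 1"
proof -
  obtain k where k: "m = k + 2" using assms by (metis add.commute le_Suc_ex)
  have "P_poly m 1 \<le> 0"
    unfolding P_poly_def k by (simp add: chebU_at_1)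
  moreover have "P_poly m 2 \<ge> 0"
    unfolding P_poly_def k using chebU_ge_1_mono[of 2 k] by simp
  moreover have "isCont (P_poly m) x" for x
    unfolding P_poly_def[abs_def] by (intro continuous_intros isCont_chebU)
  ultimately obtain x where "1 \<le> x" "P_poly m x = 0"
    using IVT[of "P_poly m" 1 0 2] by auto
  then show ?thesis using largest by force
qed

section \<open>Completing squares\<close>

lemma Re_mult_cnj_le:
  fixes a b w :: complex and p :: real
  assumes "cmod w = 1" and "p > 0"
  shows "Re (w * (cnj a * b)) \<le> p * (cmod a)\<^sup>2 + (cmod b)\<^sup>2 / (4 * p)"
proof -
  have "Re (w * (cnj a * b)) \<le> cmod a * cmod b"
    using complex_Re_le_cmod[of "w * (cnj a * b)"] assms(1) by (simp add: norm_mult)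
  also have "\<dots> \<le> p * (cmod a)\<^sup>2 + (cmod b)\<^sup>2 / (4 * p)"
  proof -
    have "0 \<le> (2 * p * cmod a - cmod b)\<^sup>2 / (4 * p)" using assms(2) by simp
    also have "\<dots> = p * (cmod a)\<^sup>2 + (cmod b)\<^sup>2 / (4 * p) - cmod a * cmod b"
      using assms(2) by (simp add: field_simps power2_eq_square)
    finally show ?thesis by simp
  qed
  finally show ?thesis .
qed

text \<open>Completing squares along a path: the weights \<open>p\<^sub>j = U\<^sub>j\<^sub>+\<^sub>1 / (2 U\<^sub>j)\<close>
  satisfy \<open>p\<^sub>j\<^sub>+\<^sub>1 = \<lambda> - 1 / (4 p\<^sub>j)\<close> by the Chebyshev recurrence.\<close>
lemma Re_path_form_le:
  fixes x :: "nat \<Rightarrow> complex" and w :: complex and lam :: real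
  assumes "lam \<ge> 1" and "cmod w = 1"
  shows "(\<Sum>i<j. Re (w * (cnj (x i) * x (Suc i))))
           + chebU (Suc j) lam / (2 * chebU j lam) * (cmod (x j))\<^sup>2
         \<le> lam * (\<Sum>i\<le>j. (cmod (x i))\<^sup>2)"
proof (induction j)
  case 0
  then show ?case using chebU_pos[OF assms(1), of 0] by simp
next
  case (Suc j)
  define p where "p = chebU (Suc j) lam / (2 * chebU j lam)"
  have U_pos: "chebU j lam > 0" "chebU (Suc j) lam > 0"
    using chebU_pos[OF assms(1)] by auto
  have "p > 0" unfolding p_def using U_pos by simp
  have p_rec: "lam - 1 / (4 * p) = chebU (Suc (Suc j)) lam / (2 * chebU (Suc j) lam)"
    unfolding p_def using U_pos by (simp add: field_simps)
  have "Re (w * (cnj (x j) * x (Suc j))) \<le> p * (cmod (x j))\<^sup>2 + (cmod (x (Suc j)))\<^sup>2 / (4 * p)"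
    using Re_mult_cnj_le[OF assms(2) \<open>p > 0\<close>] .
  moreover have "lam * (\<Sum>i\<le>Suc j. (cmod (x i))\<^sup>2)
      = lam * (\<Sum>i\<le>j. (cmod (x i))\<^sup>2) + (lam - 1 / (4 * p)) * (cmod (x (Suc j)))\<^sup>2
        + (cmod (x (Suc j)))\<^sup>2 / (4 * p)"
    by (simp add: algebra_simps)
  ultimately show ?case using Suc.IH unfolding p_rec[symmetric] p_def by simp
qed

lemma Re_reversed_path_form_le:
  fixes x :: "nat \<Rightarrow> complex" and w :: complex and lam :: real
  assumes "lam \<ge> 1" and "cmod w = 1"
  shows "(\<Sum>i<j. Re (w * (cnj (x (n - Suc i)) * x (n - i))))
           + chebU (Suc j) lam / (2 * chebU j lam) * (cmod (x (n - j)))\<^sup>2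
         \<le> lam * (\<Sum>i\<le>j. (cmod (x (n - i)))\<^sup>2)"
proof -
  have "Re (w * (cnj (x (n - Suc i)) * x (n - i))) = Re (cnj w * (cnj (x (n - i)) * x (n - Suc i)))" for i
    by (simp add: algebra_simps)
  then show ?thesis
    using Re_path_form_le[OF assms(1), where w = "cnj w" and j = j and x = "\<lambda>i. x (n - i)"] assms(2)
    by simp
qed

text \<open>The sum-of-squares certificate for the four coordinates on which the perturbation
  acts; the primed variables stand for the conjugates and \<open>t = 1 / (2\<mu>)\<close>.\<close>
lemma middle_block_sos:
  fixes a a' b b' c c' d d' w w' M L t :: complex
  assumes "w * w' = 1" and "2 * M * t = 1" and "2 * L = 2 * t + 1"
  shows "2 * (M * (a * a') + L * (b * b') + L * (c * c') + M * (d * d'))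
      - (w * (a' * b + b' * c + c' * d + a' * c - b' * d)
         + w' * (a * b' + b * c' + c * d' + a * c' - b * d'))
    = 2 * M * ((a - w * (b + c) * t) * (a' - w' * (b' + c') * t))
      + 2 * M * ((d - w' * (c - b) * t) * (d' - w * (c' - b') * t))
      + (b - w * c) * (b' - w' * c')"
  using assms by Groebner_Basis.algebra

lemma middle_block_Re_le:
  fixes a b c d w :: complex and mu lam :: real
  assumes w: "cmod w = 1" and mu: "mu > 0" and lam: "2 * mu * lam - mu = 1"
  shows "Re (w * (cnj a * b + cnj b * c + cnj c * d + cnj a * c - cnj b * d))
     \<le> mu * (cmod a)\<^sup>2 + lam * (cmod b)\<^sup>2 + lam * (cmod c)\<^sup>2 + mu * (cmod d)\<^sup>2"
proof -
  define t where "t = 1 / (2 * mu)"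
  have ww: "w * cnj w = 1"
    using w by (metis complex_norm_square of_real_1 power_one)
  have t: "2 * complex_of_real mu * complex_of_real t = 1"
    unfolding t_def using mu by simp
  have "2 * lam = 2 * t + 1"
    unfolding t_def using mu lam by (simp add: field_simps)
  then have lam_t: "2 * complex_of_real lam = 2 * complex_of_real t + 1"
    by (metis of_real_1 of_real_add of_real_mult of_real_numeral)
  have Re_twice: "2 * complex_of_real (Re z) = z + cnj z" for z
    by (simp add: complex_add_cnj)
  have "complex_of_real
      (2 * (mu * (cmod a)\<^sup>2 + lam * (cmod b)\<^sup>2 + lam * (cmod c)\<^sup>2 + mu * (cmod d)\<^sup>2)
       - 2 * Re (w * (cnj a * b + cnj b * c + cnj c * d + cnj a * c - cnj b * d)))
    = complex_of_real (2 * mu * (cmod (a - w * (b + c) * t))\<^sup>2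
       + 2 * mu * (cmod (d - cnj w * (c - b) * t))\<^sup>2 + (cmod (b - w * c))\<^sup>2)"
    unfolding of_real_add of_real_diff of_real_mult of_real_numeral complex_norm_square Re_twice
    using middle_block_sos[OF ww t lam_t, of a "cnj a" b "cnj b" c "cnj c" d "cnj d"]
    by (simp add: algebra_simps)
  then have "2 * (mu * (cmod a)\<^sup>2 + lam * (cmod b)\<^sup>2 + lam * (cmod c)\<^sup>2 + mu * (cmod d)\<^sup>2)
       - 2 * Re (w * (cnj a * b + cnj b * c + cnj c * d + cnj a * c - cnj b * d)) \<ge> 0"
    unfolding of_real_eq_iff using mu by simp
  then show ?thesis by simp
qed

lemma sum_split_middle_two:
  fixes g :: "nat \<Rightarrow> 'a::comm_monoid_add"
  shows "(\<Sum>i<2*k+4. g i) = (\<Sum>i\<le>k. g i) + g (k+1) + g (k+2) + (\<Sum>i\<le>k. g (2*k+3-i))"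
proof -
  have "(\<Sum>i\<le>k. g (2*k+3-i)) = (\<Sum>i\<in>{k+3..<2*k+4}. g i)"
    by (rule sum.reindex_bij_witness[of _ "\<lambda>j. 2*k+3-j" "\<lambda>i. 2*k+3-i"]) auto
  moreover have "(\<Sum>i\<in>{0..<k+1}. g i) + (\<Sum>i\<in>{k+1..<k+3}. g i) = (\<Sum>i\<in>{0..<k+3}. g i)"
    by (rule sum.atLeastLessThan_concat) auto
  moreover have "(\<Sum>i\<in>{0..<k+3}. g i) + (\<Sum>i\<in>{k+3..<2*k+4}. g i) = (\<Sum>i<2*k+4. g i)"
    unfolding atLeast0LessThan[symmetric] by (rule sum.atLeastLessThan_concat) auto
  moreover have "(\<Sum>i\<in>{k+1..<k+3}. g i) = g (k+1) + g (k+2)"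
    by (simp add: numeral_3_eq_3)
  ultimately show ?thesis
    by (simp add: atLeast0LessThan lessThan_Suc_atMost ac_simps)
qed

lemma sum_split_middle_three:
  fixes h :: "nat \<Rightarrow> 'a::comm_monoid_add"
  shows "(\<Sum>i<2*k+3. h i) = (\<Sum>i<k. h i) + h k + h (k+1) + h (k+2) + (\<Sum>i<k. h (2*k+2-i))"
proof -
  have "(\<Sum>i<k. h (2*k+2-i)) = (\<Sum>i\<in>{k+3..<2*k+3}. h i)"
    by (rule sum.reindex_bij_witness[of _ "\<lambda>j. 2*k+2-j" "\<lambda>i. 2*k+2-i"]) auto
  moreover have "(\<Sum>i\<in>{0..<k}. h i) + (\<Sum>i\<in>{k..<k+3}. h i) = (\<Sum>i\<in>{0..<k+3}. h i)"
    by (rule sum.atLeastLessThan_concat) auto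
  moreover have "(\<Sum>i\<in>{0..<k+3}. h i) + (\<Sum>i\<in>{k+3..<2*k+3}. h i) = (\<Sum>i<2*k+3. h i)"
    unfolding atLeast0LessThan[symmetric] by (rule sum.atLeastLessThan_concat) auto
  moreover have "(\<Sum>i\<in>{k..<k+3}. h i) = h k + h (k+1) + h (k+2)"
    by (simp add: numeral_3_eq_3)
  ultimately show ?thesis
    by (simp add: atLeast0LessThan ac_simps)
qed

section \<open>Eigenvalues of the Hermitian part\<close>

lemma cnj_exp_minus_i_times: "cnj (exp (- \<i> * complex_of_real t)) = exp (\<i> * complex_of_real t)"
  using cis_cnj[of "- t"] by (simp add: cis_conv_exp)

lemma ctrans_carrier: "X \<in> carrier_mat n n \<Longrightarrow> ctrans X \<in> carrier_mat n n"
  by (simp add: ctrans_def)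

lemma H_mat_carrier: "X \<in> carrier_mat n n \<Longrightarrow> H_mat X \<theta> \<in> carrier_mat n n"
  by (simp add: H_mat_def ctrans_carrier)

lemma H_mat_mult_vec_index:
  assumes X: "X \<in> carrier_mat n n" and "v \<in> carrier_vec n" and "i < n"
  shows "(H_mat X \<theta> *\<^sub>v v) $ i
    = (exp (- \<i> * \<theta>) * (X *\<^sub>v v) $ i + exp (\<i> * \<theta>) * (ctrans X *\<^sub>v v) $ i) / 2"
proof -
  have "(H_mat X \<theta> *\<^sub>v v) $ i
      = (\<Sum>j<n. (exp (- \<i> * \<theta>) * (X $$ (i, j) * v $ j) + exp (\<i> * \<theta>) * (ctrans X $$ (i, j) * v $ j)) / 2)"
    using assms ctrans_carrier[OF X]
    by (auto simp: H_mat_def scalar_prod_def atLeast0LessThan algebra_simps intro!: sum.cong)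
  also have "\<dots> = (exp (- \<i> * \<theta>) * (X *\<^sub>v v) $ i + exp (\<i> * \<theta>) * (ctrans X *\<^sub>v v) $ i) / 2"
    using assms ctrans_carrier[OF X]
    by (simp add: scalar_prod_def atLeast0LessThan sum.distrib sum_distrib_left sum_divide_distrib[symmetric])
  finally show ?thesis .
qed

lemma ctrans_quadratic_form:
  assumes "X \<in> carrier_mat n n" and "v \<in> carrier_vec n"
  shows "(\<Sum>i<n. cnj (v $ i) * (ctrans X *\<^sub>v v) $ i) = cnj (\<Sum>i<n. cnj (v $ i) * (X *\<^sub>v v) $ i)"
proof -
  have "(\<Sum>i<n. cnj (v $ i) * (ctrans X *\<^sub>v v) $ i) = (\<Sum>i<n. \<Sum>j<n. cnj (v $ i) * cnj (X $$ (j, i)) * v $ j)"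
    using assms by (simp add: ctrans_def scalar_prod_def atLeast0LessThan sum_distrib_left mult.assoc)
  also have "\<dots> = (\<Sum>j<n. \<Sum>i<n. cnj (v $ i) * cnj (X $$ (j, i)) * v $ j)"
    by (rule sum.swap)
  also have "\<dots> = cnj (\<Sum>i<n. cnj (v $ i) * (X *\<^sub>v v) $ i)"
    using assms by (simp add: scalar_prod_def atLeast0LessThan sum_distrib_left algebra_simps)
  finally show ?thesis .
qed

lemma H_mat_Rayleigh:
  assumes X: "X \<in> carrier_mat n n" and v: "v \<in> carrier_vec n"
    and eig: "H_mat X \<theta> *\<^sub>v v = \<nu> \<cdot>\<^sub>v v"
  shows "\<nu> * complex_of_real (\<Sum>i<n. (cmod (v $ i))\<^sup>2)
    = complex_of_real (Re (exp (- \<i> * \<theta>) * (\<Sum>i<n. cnj (v $ i) * (X *\<^sub>v v) $ i)))"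
proof -
  define w where "w = exp (- \<i> * \<theta>)"
  define Q where "Q = (\<Sum>i<n. cnj (v $ i) * (X *\<^sub>v v) $ i)"
  have exp_cnj: "exp (\<i> * \<theta>) = cnj w"
    unfolding w_def by (rule cnj_exp_minus_i_times[symmetric])
  have norm_square: "cnj u * (\<nu> * u) = \<nu> * complex_of_real ((cmod u)\<^sup>2)" for u
    by (subst complex_norm_square) (simp add: algebra_simps)
  have "\<nu> * complex_of_real (\<Sum>i<n. (cmod (v $ i))\<^sup>2) = (\<Sum>i<n. cnj (v $ i) * (\<nu> * v $ i))"
    unfolding of_real_sum sum_distrib_left norm_square ..
  also have "\<dots> = (\<Sum>i<n. cnj (v $ i) * (H_mat X \<theta> *\<^sub>v v) $ i)"
    using v eig by simp
  also have "\<dots> = (\<Sum>i<n. cnj (v $ i) * ((w * (X *\<^sub>v v) $ i + cnj w * (ctrans X *\<^sub>v v) $ i) / 2))"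
    by (intro sum.cong) (simp_all add: H_mat_mult_vec_index[OF X v] w_def exp_cnj)
  also have "\<dots> = (w * Q + cnj w * (\<Sum>i<n. cnj (v $ i) * (ctrans X *\<^sub>v v) $ i)) / 2"
    unfolding Q_def by (simp add: sum_divide_distrib[symmetric] sum.distrib sum_distrib_left algebra_simps)
  also have "\<dots> = complex_of_real (Re (w * Q))"
    unfolding ctrans_quadratic_form[OF X v] Q_def[symmetric] by (simp add: complex_add_cnj[of "w * Q", simplified])
  finally show ?thesis unfolding w_def Q_def .
qed

lemma H_mat_eigenvalue_le:
  assumes X: "X \<in> carrier_mat n n"
    and radius: "\<And>v. v \<in> carrier_vec n \<Longrightarrow>
      cmod (\<Sum>i<n. cnj (v $ i) * (X *\<^sub>v v) $ i) \<le> c * (\<Sum>i<n. (cmod (v $ i))\<^sup>2)"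
    and "eigenvalue (H_mat X \<theta>) \<nu>"
  shows "\<nu> \<in> \<real> \<and> Re \<nu> \<le> c"
proof -
  obtain v where v: "v \<in> carrier_vec n" "v \<noteq> 0\<^sub>v n" "H_mat X \<theta> *\<^sub>v v = \<nu> \<cdot>\<^sub>v v"
    using assms(3) unfolding eigenvalue_def eigenvector_def
    by (auto simp: carrier_matD(1)[OF H_mat_carrier[OF X]])
  define N where "N = (\<Sum>i<n. (cmod (v $ i))\<^sup>2)"
  define r where "r = Re (exp (- \<i> * \<theta>) * (\<Sum>i<n. cnj (v $ i) * (X *\<^sub>v v) $ i))"
  have "N > 0"
  proof -
    obtain i where "i < n" "v $ i \<noteq> 0"
      using v(1,2) by (metis carrier_vecD eq_vecI index_zero_vec)
    then have "0 < (cmod (v $ i))\<^sup>2" "(cmod (v $ i))\<^sup>2 \<le> N"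
      unfolding N_def by (auto intro!: member_le_sum)
    then show ?thesis by linarith
  qed
  have "r \<le> cmod (exp (- \<i> * \<theta>) * (\<Sum>i<n. cnj (v $ i) * (X *\<^sub>v v) $ i))"
    unfolding r_def by (rule complex_Re_le_cmod)
  also have "\<dots> \<le> c * N"
    using radius[OF v(1)] unfolding N_def by (simp add: norm_mult)
  finally have "r / N \<le> c"
    using \<open>N > 0\<close> by (simp add: divide_le_eq mult.commute)
  moreover have "\<nu> * complex_of_real N = complex_of_real r"
    unfolding N_def r_def by (rule H_mat_Rayleigh[OF X v(1) v(3)])
  then have "\<nu> = complex_of_real (r / N)"
    using \<open>N > 0\<close> by (simp add: field_simps)
  ultimately show ?thesis by simp
qed

section \<open>The numerical radius of \<open>C\<close>\<close>

lemma C_mat_carrier: "C_mat m \<in> carrier_mat (2 * m) (2 * m)"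
  unfolding carrier_mat_def by (simp add: C_mat_def J_mat_def E_unit_def)

lemma C_mat_index:
  "i < 2 * m \<Longrightarrow> j < 2 * m \<Longrightarrow> C_mat m $$ (i, j) =
     (if j = Suc i then 1 else 0) + (if Suc i = m - 1 \<and> j = m then 1 else 0)
     - (if Suc i = m \<and> j = m + 1 then 1 else 0)"
  by (auto simp add: C_mat_def J_mat_def E_unit_def)

lemma C_mat_mult_vec_index:
  assumes "m \<ge> 2" and "v \<in> carrier_vec (2 * m)" and "i < 2 * m"
  shows "(C_mat m *\<^sub>v v) $ i = (if Suc i < 2 * m then v $ Suc i else 0)
     + (if Suc i = m - 1 then v $ m else 0) - (if Suc i = m then v $ (m + 1) else 0)"
proof -
  have "(C_mat m *\<^sub>v v) $ i = (\<Sum>j<2 * m. C_mat m $$ (i, j) * v $ j)"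
    using assms C_mat_carrier[of m] by (simp add: scalar_prod_def atLeast0LessThan)
  also have "\<dots> = (\<Sum>j<2 * m. (if j = Suc i then v $ j else 0)
      + (if Suc i = m - 1 then if j = m then v $ j else 0 else 0)
      - (if Suc i = m then if j = m + 1 then v $ j else 0 else 0))"
    by (rule sum.cong) (use assms in \<open>simp_all add: C_mat_index\<close>)
  also have "\<dots> = (if Suc i < 2 * m then v $ Suc i else 0)
      + (if Suc i = m - 1 then v $ m else 0) - (if Suc i = m then v $ (m + 1) else 0)"
    using assms by (simp add: sum.distrib sum_subtractf)
  finally show ?thesis .
qed

lemma ctrans_C_mat_mult_vec_index:
  assumes "m \<ge> 2" and "v \<in> carrier_vec (2 * m)" and "i < 2 * m"
  shows "(ctrans (C_mat m) *\<^sub>v v) $ i = (if 0 < i then v $ (i - 1) else 0)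
     + (if i = m then v $ (m - 2) else 0) - (if i = m + 1 then v $ (m - 1) else 0)"
proof -
  have "(ctrans (C_mat m) *\<^sub>v v) $ i = (\<Sum>j<2 * m. cnj (C_mat m $$ (j, i)) * v $ j)"
    using assms C_mat_carrier[of m] by (simp add: ctrans_def scalar_prod_def atLeast0LessThan)
  also have "\<dots> = (\<Sum>j<2 * m. (if j = i - 1 then if 0 < i then v $ j else 0 else 0)
      + (if j = m - 2 then if i = m then v $ j else 0 else 0)
      - (if j = m - 1 then if i = m + 1 then v $ j else 0 else 0))"
  proof (rule sum.cong)
    fix j assume "j \<in> {..<2 * m}"
    moreover have "(i = Suc j) = (0 < i \<and> j = i - 1)" "(Suc j = m - 1) = (j = m - 2)"
      "(Suc j = m) = (j = m - 1)"
      using assms by auto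
    ultimately show "cnj (C_mat m $$ (j, i)) * v $ j = (if j = i - 1 then if 0 < i then v $ j else 0 else 0)
      + (if j = m - 2 then if i = m then v $ j else 0 else 0)
      - (if j = m - 1 then if i = m + 1 then v $ j else 0 else 0)"
      using assms by (simp add: C_mat_index)
  qed simp
  also have "\<dots> = (if 0 < i then v $ (i - 1) else 0)
      + (if i = m then v $ (m - 2) else 0) - (if i = m + 1 then v $ (m - 1) else 0)"
    using assms by (simp add: sum.distrib sum_subtractf less_imp_diff_less)
  finally show ?thesis .
qed

text \<open>\<open>x\<^sup>* C x\<close> in 0-based coordinates; the last two terms come from the perturbation
  \<open>E\<^sub>m\<^sub>-\<^sub>1\<^sub>,\<^sub>m\<^sub>+\<^sub>1 - E\<^sub>m\<^sub>,\<^sub>m\<^sub>+\<^sub>2\<close>.\<close>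
definition C_qform :: "nat \<Rightarrow> (nat \<Rightarrow> complex) \<Rightarrow> complex" where
  "C_qform m x = (\<Sum>i<2 * m - 1. cnj (x i) * x (Suc i))
     + cnj (x (m - 2)) * x m - cnj (x (m - 1)) * x (m + 1)"

lemma C_mat_quadratic_form:
  assumes "m \<ge> 2" and v: "v \<in> carrier_vec (2 * m)"
  shows "(\<Sum>i<2 * m. cnj (v $ i) * (C_mat m *\<^sub>v v) $ i) = C_qform m (($) v)"
proof -
  define f where "f i = cnj (v $ i) * (if Suc i < 2 * m then v $ Suc i else 0)" for i
  have "2 * m = Suc (2 * m - 1)" using assms by simp
  then have "(\<Sum>i<2 * m. f i) = (\<Sum>i<2 * m - 1. f i) + f (2 * m - 1)"
    by (metis sum.lessThan_Suc)
  also have "\<dots> = (\<Sum>i<2 * m - 1. cnj (v $ i) * v $ Suc i)"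
    unfolding f_def by (auto intro!: sum.cong)
  finally have path: "(\<Sum>i<2 * m. f i) = (\<Sum>i<2 * m - 1. cnj (v $ i) * v $ Suc i)" .
  have "(\<Sum>i<2 * m. cnj (v $ i) * (C_mat m *\<^sub>v v) $ i)
      = (\<Sum>i<2 * m. f i + (if i = m - 2 then cnj (v $ i) * v $ m else 0)
          - (if i = m - 1 then cnj (v $ i) * v $ (m + 1) else 0))"
    by (rule sum.cong) (use assms in \<open>auto simp: C_mat_mult_vec_index f_def ring_distribs\<close>)
  also have "\<dots> = C_qform m (($) v)"
    using assms unfolding C_qform_def path[symmetric] by (simp add: sum.distrib sum_subtractf less_imp_diff_less)
  finally show ?thesis .
qed

text \<open>The path bounds at both ends leave the weight \<open>\<mu> = U\<^sub>k\<^sub>+\<^sub>1 / (2 U\<^sub>k)\<close> on the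
  coordinates \<open>k\<close> and \<open>k + 3\<close>, which is what the middle block needs, since
  \<open>P\<^sub>m(\<lambda>) = 0\<close> says \<open>2\<mu>\<lambda> - \<mu> = 1\<close>.\<close>
lemma Re_C_qform_le:
  fixes x :: "nat \<Rightarrow> complex"
  assumes m: "m \<ge> 2" and lam: "lam \<ge> 1"
    and rel: "(2 * lam - 1) * chebU (m - 1) lam = 2 * chebU (m - 2) lam"
    and w: "cmod w = 1"
  shows "Re (w * C_qform m x) \<le> lam * (\<Sum>i<2 * m. (cmod (x i))\<^sup>2)"
proof -
  obtain k where k: "m = k + 2" using m by (metis add.commute le_Suc_ex)
  define mu where "mu = chebU (Suc k) lam / (2 * chebU k lam)"
  have U_pos: "chebU k lam > 0" "chebU (Suc k) lam > 0"
    using chebU_pos[OF lam] by auto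
  have "mu > 0" unfolding mu_def using U_pos by simp
  have "2 * mu * lam - mu = 1"
    using rel U_pos unfolding mu_def k by (simp add: field_simps)
  define h where "h i = Re (w * (cnj (x i) * x (Suc i)))" for i
  have left: "(\<Sum>i<k. h i) + mu * (cmod (x k))\<^sup>2 \<le> lam * (\<Sum>i\<le>k. (cmod (x i))\<^sup>2)"
    using Re_path_form_le[OF lam w, where j = k and x = x] unfolding h_def mu_def .
  have "(\<Sum>i<k. h (2 * k + 2 - i)) = (\<Sum>i<k. Re (w * (cnj (x (2 * k + 3 - Suc i)) * x (2 * k + 3 - i))))"
  proof (rule sum.cong)
    fix i assume "i \<in> {..<k}"
    then have "2 * k + 3 - Suc i = 2 * k + 2 - i" "2 * k + 3 - i = Suc (2 * k + 2 - i)" by auto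
    then show "h (2 * k + 2 - i) = Re (w * (cnj (x (2 * k + 3 - Suc i)) * x (2 * k + 3 - i)))"
      unfolding h_def by (simp only:)
  qed simp
  then have right: "(\<Sum>i<k. h (2 * k + 2 - i)) + mu * (cmod (x (k + 3)))\<^sup>2
      \<le> lam * (\<Sum>i\<le>k. (cmod (x (2 * k + 3 - i)))\<^sup>2)"
    using Re_reversed_path_form_le[OF lam w, where j = k and n = "2 * k + 3" and x = x]
    unfolding mu_def by simp
  have middle: "h k + h (k + 1) + h (k + 2) + Re (w * (cnj (x k) * x (k + 2)))
      - Re (w * (cnj (x (k + 1)) * x (k + 3)))
      \<le> mu * (cmod (x k))\<^sup>2 + lam * (cmod (x (k + 1)))\<^sup>2 + lam * (cmod (x (k + 2)))\<^sup>2
        + mu * (cmod (x (k + 3)))\<^sup>2"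
    using middle_block_Re_le[OF w \<open>mu > 0\<close> \<open>2 * mu * lam - mu = 1\<close>,
        of "x k" "x (k + 1)" "x (k + 2)" "x (k + 3)"]
    unfolding h_def by (simp add: algebra_simps numeral_3_eq_3)
  have "2 * m = 2 * k + 4" using k by simp
  then have norm: "(\<Sum>i<2 * m. (cmod (x i))\<^sup>2) = (\<Sum>i\<le>k. (cmod (x i))\<^sup>2)
      + (cmod (x (k + 1)))\<^sup>2 + (cmod (x (k + 2)))\<^sup>2 + (\<Sum>i\<le>k. (cmod (x (2 * k + 3 - i)))\<^sup>2)"
    by (simp only: sum_split_middle_two)
  have "Re (w * C_qform m x) = (\<Sum>i<2 * k + 3. h i)
      + Re (w * (cnj (x k) * x (k + 2))) - Re (w * (cnj (x (k + 1)) * x (k + 3)))"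
    unfolding C_qform_def h_def k by (simp add: sum_distrib_left algebra_simps numeral_3_eq_3)
  then show ?thesis
    using left right middle unfolding norm sum_split_middle_three distrib_left by linarith
qed

lemma cmod_C_qform_le:
  assumes "m \<ge> 2" and lam: "lam \<ge> 1"
    and "(2 * lam - 1) * chebU (m - 1) lam = 2 * chebU (m - 2) lam"
  shows "cmod (C_qform m x) \<le> lam * (\<Sum>i<2 * m. (cmod (x i))\<^sup>2)"
proof (cases "C_qform m x = 0")
  case True
  then show ?thesis using lam by (simp add: sum_nonneg)
next
  case False
  define w where "w = cnj (C_qform m x) / cmod (C_qform m x)"
  have "cmod w = 1" unfolding w_def using False by (simp add: norm_divide)
  have "Re (w * C_qform m x) = (cmod (C_qform m x))\<^sup>2 / cmod (C_qform m x)"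
    unfolding w_def cmod_power2 by (simp add: power2_eq_square)
  also have "\<dots> = cmod (C_qform m x)"
    using False by (simp add: power2_eq_square)
  finally show ?thesis
    using Re_C_qform_le[OF assms \<open>cmod w = 1\<close>, where x = x] by simp
qed

lemma eigenvalue_H_C_mat_le:
  assumes "m \<ge> 2" and "lam \<ge> 1"
    and "(2 * lam - 1) * chebU (m - 1) lam = 2 * chebU (m - 2) lam"
    and "eigenvalue (H_mat (C_mat m) \<theta>) \<nu>"
  shows "\<nu> \<in> \<real> \<and> Re \<nu> \<le> lam"
proof (rule H_mat_eigenvalue_le[OF C_mat_carrier _ assms(4)])
  fix v :: "complex vec"
  assume "v \<in> carrier_vec (2 * m)"
  then show "cmod (\<Sum>i<2 * m. cnj (v $ i) * (C_mat m *\<^sub>v v) $ i) \<le> lam * (\<Sum>i<2 * m. (cmod (v $ i))\<^sup>2)"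
    using C_mat_quadratic_form[OF assms(1)] cmod_C_qform_le[OF assms(1-3)] by simp
qed

lemma largest_eigenvalue_H_C_mat:
  assumes "m \<ge> 2" and "lam \<ge> 1"
    and "(2 * lam - 1) * chebU (m - 1) lam = 2 * chebU (m - 2) lam"
    and "eigenvalue (H_mat (C_mat m) \<theta>) lam"
  shows "largest_eigenvalue (H_mat (C_mat m) \<theta>) lam"
  using assms eigenvalue_H_C_mat_le[OF assms(1-3)] unfolding largest_eigenvalue_def by auto

section \<open>Eigenvectors\<close>

definition chebU_prev :: "nat \<Rightarrow> real \<Rightarrow> real" where
  "chebU_prev j u = (if j = 0 then 0 else chebU (j - 1) u)"

lemma chebU_prev_rec: "chebU_prev (Suc (Suc j)) u = 2 * u * chebU_prev (Suc j) u - chebU_prev j u"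
  by (cases j) (simp_all add: chebU_prev_def)

text \<open>The convention \<open>U\<^sub>-\<^sub>1 = 0\<close> built into
  \<^const>\<open>chebU_prev\<close> makes coordinate \<open>2m\<close> vanish, so the last row needs no special case.\<close>
definition C_eigvec :: "nat \<Rightarrow> real \<Rightarrow> complex \<Rightarrow> complex \<Rightarrow> complex \<Rightarrow> nat \<Rightarrow> complex" where
  "C_eigvec m lam \<eta> \<alpha> q i = \<eta> ^ i *
     (if i \<le> m - 2 then complex_of_real (chebU_prev (Suc i) lam)
      else if i \<le> m then \<alpha> * complex_of_real (chebU_prev m lam)
      else q * complex_of_real (chebU_prev (2 * m - i) lam))"

lemma C_eigvec_first_half_row:
  fixes \<eta> \<alpha> q :: complex and lam :: real and f :: "nat \<Rightarrow> complex"
  assumes \<eta>: "\<eta> * cnj \<eta> = 1" and i: "i < m - 2"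
  defines "f \<equiv> C_eigvec m lam \<eta> \<alpha> q"
  shows "(cnj \<eta> * f (Suc i) + \<eta> * (if 0 < i then f (i - 1) else 0)) / 2 = lam * f i"
proof -
  define e where "e = \<eta> ^ i"
  define v0 where "v0 = complex_of_real (chebU_prev i lam)"
  define v1 where "v1 = complex_of_real (chebU_prev (i + 1) lam)"
  define v2 where "v2 = complex_of_real (chebU_prev (i + 2) lam)"
  have "v2 = 2 * complex_of_real lam * v1 - v0"
    unfolding v0_def v1_def v2_def by (simp add: chebU_prev_rec)
  then have "(cnj \<eta> * (e * \<eta> * v2) + e * v0) / 2 = lam * (e * v1)"
    using \<eta> by Groebner_Basis.algebra
  moreover have "f i = e * v1" "f (Suc i) = e * \<eta> * v2"
    using i unfolding f_def C_eigvec_def e_def v1_def v2_def by simp_all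
  moreover have "\<eta> * (if 0 < i then f (i - 1) else 0) = e * v0"
    using i unfolding f_def C_eigvec_def e_def v0_def chebU_prev_def by (cases i) simp_all
  ultimately show ?thesis by simp
qed

lemma C_eigvec_second_half_row:
  fixes \<eta> \<alpha> q :: complex and lam :: real and f :: "nat \<Rightarrow> complex"
  assumes \<eta>: "\<eta> * cnj \<eta> = 1" and i: "m + 1 < i" "i < 2 * m"
  defines "f \<equiv> C_eigvec m lam \<eta> \<alpha> q"
  shows "(cnj \<eta> * f (Suc i) + \<eta> * f (i - 1)) / 2 = lam * f i"
proof -
  define t where "t = 2 * m - 1 - i"
  define e where "e = \<eta> ^ (i - 1)"
  define v0 where "v0 = complex_of_real (chebU_prev t lam)"
  define v1 where "v1 = complex_of_real (chebU_prev (t + 1) lam)"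
  define v2 where "v2 = complex_of_real (chebU_prev (t + 2) lam)"
  have "v2 = 2 * complex_of_real lam * v1 - v0"
    unfolding v0_def v1_def v2_def by (simp add: chebU_prev_rec)
  then have "(cnj \<eta> * (e * \<eta> * \<eta> * q * v0) + \<eta> * (e * q * v2)) / 2 = lam * (e * \<eta> * q * v1)"
    using \<eta> by Groebner_Basis.algebra
  moreover have "i = Suc (i - 1)" using i by simp
  then have "\<eta> ^ i = e * \<eta>" unfolding e_def by (metis power_Suc2)
  moreover have "2 * m - (i - 1) = t + 2" "2 * m - i = t + 1" "2 * m - Suc i = t"
    "\<not> i - 1 \<le> m" "\<not> i \<le> m" "\<not> Suc i \<le> m" "\<not> i - 1 \<le> m - 2" "\<not> i \<le> m - 2" "\<not> Suc i \<le> m - 2"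
    unfolding t_def using i by auto
  ultimately show ?thesis
    unfolding f_def C_eigvec_def e_def v0_def v1_def v2_def by (simp add: mult_ac)
qed

text \<open>Rows \<open>p, \<dots>, p + 3\<close> are the rows \<open>m - 1, \<dots>, m + 2\<close> of the paper, those touched
  by the perturbation.\<close>
lemma C_eigvec_middle_rows:
  fixes \<eta> \<alpha> q :: complex and lam :: real and f :: "nat \<Rightarrow> complex"
  assumes m: "m = p + 2"
    and \<eta>: "\<eta> * cnj \<eta> = 1" and \<alpha>: "\<alpha> * (1 + \<eta>) = 1" and q: "q * (1 + \<eta>) = 1 - cnj \<eta>"
    and rel: "(2 * lam - 1) * chebU (p + 1) lam = 2 * chebU p lam"
  defines "f \<equiv> C_eigvec m lam \<eta> \<alpha> q"
  shows "(cnj \<eta> * (f (p + 1) + f (p + 2)) + \<eta> * (if 0 < p then f (p - 1) else 0)) / 2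
      = lam * f p"
    and "(cnj \<eta> * (f (p + 2) - f (p + 3)) + \<eta> * f p) / 2 = lam * f (p + 1)"
    and "(cnj \<eta> * f (p + 3) + \<eta> * (f (p + 1) + f p)) / 2 = lam * f (p + 2)"
    and "(cnj \<eta> * f (p + 4) + \<eta> * (f (p + 2) - f (p + 1))) / 2 = lam * f (p + 3)"
proof -
  define l where "l = complex_of_real lam"
  define b where "b = \<eta> ^ p"
  define w0 where "w0 = complex_of_real (chebU_prev p lam)"
  define w1 where "w1 = complex_of_real (chebU_prev (p + 1) lam)"
  define w2 where "w2 = complex_of_real (chebU_prev (p + 2) lam)"
  have rec: "w2 = 2 * l * w1 - w0"
    unfolding w0_def w1_def w2_def l_def by (simp add: chebU_prev_rec)
  have "(2 * lam - 1) * chebU_prev (p + 2) lam = 2 * chebU_prev (p + 1) lam"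
    using rel by (simp add: chebU_prev_def)
  then have rel': "(2 * l - 1) * w2 = 2 * w1"
    unfolding w1_def w2_def l_def by (metis of_real_1 of_real_diff of_real_mult of_real_numeral)
  have f: "f p = b * w1" "f (p + 1) = b * \<eta> * \<alpha> * w2" "f (p + 2) = b * \<eta> * \<eta> * \<alpha> * w2"
    "f (p + 3) = b * \<eta> * \<eta> * \<eta> * q * w1" "f (p + 4) = b * \<eta> * \<eta> * \<eta> * \<eta> * q * w0"
    unfolding f_def C_eigvec_def b_def w0_def w1_def w2_def m
    by (simp_all add: power_add eval_nat_numeral mult_ac)
  have "\<eta> * (if 0 < p then f (p - 1) else 0) = b * w0"
    unfolding f_def C_eigvec_def b_def w0_def chebU_prev_def m
    by (cases p) (simp_all add: mult_ac)
  then show "(cnj \<eta> * (f (p + 1) + f (p + 2)) + \<eta> * (if 0 < p then f (p - 1) else 0)) / 2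
      = lam * f p"
    unfolding f l_def[symmetric] using \<eta> \<alpha> rec by Groebner_Basis.algebra
  show "(cnj \<eta> * (f (p + 2) - f (p + 3)) + \<eta> * f p) / 2 = lam * f (p + 1)"
    unfolding f l_def[symmetric] using \<eta> \<alpha> q rel' by Groebner_Basis.algebra
  show "(cnj \<eta> * f (p + 3) + \<eta> * (f (p + 1) + f p)) / 2 = lam * f (p + 2)"
    unfolding f l_def[symmetric] using \<eta> \<alpha> q rel' by Groebner_Basis.algebra
  show "(cnj \<eta> * f (p + 4) + \<eta> * (f (p + 2) - f (p + 1))) / 2 = lam * f (p + 3)"
    unfolding f l_def[symmetric] using \<eta> \<alpha> q rec by Groebner_Basis.algebra
qed

lemma H_C_mat_mult_vec_index:
  assumes m: "m \<ge> 2" and f: "f (2 * m) = 0" and i: "i < 2 * m"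
  shows "(H_mat (C_mat m) \<theta> *\<^sub>v vec (2 * m) f) $ i
    = (exp (- \<i> * \<theta>) * (f (Suc i) + (if Suc i = m - 1 then f m else 0)
         - (if Suc i = m then f (m + 1) else 0))
       + exp (\<i> * \<theta>) * ((if 0 < i then f (i - 1) else 0) + (if i = m then f (m - 2) else 0)
         - (if i = m + 1 then f (m - 1) else 0))) / 2"
proof -
  have v: "vec (2 * m) f \<in> carrier_vec (2 * m)" by simp
  have "(C_mat m *\<^sub>v vec (2 * m) f) $ i
      = f (Suc i) + (if Suc i = m - 1 then f m else 0) - (if Suc i = m then f (m + 1) else 0)"
  proof (cases "Suc i < 2 * m")
    case True
    then show ?thesis using C_mat_mult_vec_index[OF m v i] m by simp
  next
    case False
    then have "Suc i = 2 * m" using i by simp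
    then show ?thesis using C_mat_mult_vec_index[OF m v i] m f by simp
  qed
  moreover have "(ctrans (C_mat m) *\<^sub>v vec (2 * m) f) $ i = (if 0 < i then f (i - 1) else 0)
      + (if i = m then f (m - 2) else 0) - (if i = m + 1 then f (m - 1) else 0)"
    using ctrans_C_mat_mult_vec_index[OF m v i] i by simp
  ultimately show ?thesis
    using H_mat_mult_vec_index[OF C_mat_carrier v i] by simp
qed

lemma C_eigvec_row:
  fixes \<eta> \<alpha> q :: complex and lam :: real and f :: "nat \<Rightarrow> complex"
  assumes m: "m \<ge> 2" and \<eta>: "\<eta> * cnj \<eta> = 1" and \<alpha>: "\<alpha> * (1 + \<eta>) = 1"
    and q: "q * (1 + \<eta>) = 1 - cnj \<eta>"
    and rel: "(2 * lam - 1) * chebU (m - 1) lam = 2 * chebU (m - 2) lam"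
    and i: "i < 2 * m"
  defines "f \<equiv> C_eigvec m lam \<eta> \<alpha> q"
  shows "(cnj \<eta> * (f (Suc i) + (if Suc i = m - 1 then f m else 0) - (if Suc i = m then f (m + 1) else 0))
      + \<eta> * ((if 0 < i then f (i - 1) else 0) + (if i = m then f (m - 2) else 0)
        - (if i = m + 1 then f (m - 1) else 0))) / 2 = lam * f i"
proof -
  obtain p where p: "m = p + 2" using m by (metis add.commute le_Suc_ex)
  have rel_p: "(2 * lam - 1) * chebU (p + 1) lam = 2 * chebU p lam"
    using rel p by simp
  consider "i < m - 2" | "m + 1 < i" | "i = p" | "i = p + 1" | "i = p + 2" | "i = p + 3"
    using p i by linarith
  then show ?thesis
  proof cases
    case 1
    then have "Suc i \<noteq> m - 1" "Suc i \<noteq> m" "i \<noteq> m" "i \<noteq> m + 1" by auto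
    then show ?thesis using C_eigvec_first_half_row[OF \<eta> 1] unfolding f_def by simp
  next
    case 2
    then have "Suc i \<noteq> m - 1" "Suc i \<noteq> m" "i \<noteq> m" "i \<noteq> m + 1" "0 < i" by auto
    then show ?thesis using C_eigvec_second_half_row[OF \<eta> 2 i] unfolding f_def by simp
  next
    case 3
    then show ?thesis using C_eigvec_middle_rows(1)[OF p \<eta> \<alpha> q rel_p, folded f_def] p
      by (cases p) simp_all
  next
    case 4
    then show ?thesis using C_eigvec_middle_rows(2)[OF p \<eta> \<alpha> q rel_p, folded f_def] p
      by (simp add: eval_nat_numeral)
  next
    case 5
    then show ?thesis using C_eigvec_middle_rows(3)[OF p \<eta> \<alpha> q rel_p, folded f_def] p
      by (simp add: eval_nat_numeral)
  next
    case 6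
    then show ?thesis using C_eigvec_middle_rows(4)[OF p \<eta> \<alpha> q rel_p, folded f_def] p
      by (simp add: eval_nat_numeral)
  qed
qed

lemma H_C_mat_mult_C_eigvec:
  fixes \<eta> \<alpha> q :: complex and lam :: real
  assumes m: "m \<ge> 2" and \<eta>: "\<eta> * cnj \<eta> = 1" and \<alpha>: "\<alpha> * (1 + \<eta>) = 1"
    and q: "q * (1 + \<eta>) = 1 - cnj \<eta>"
    and rel: "(2 * lam - 1) * chebU (m - 1) lam = 2 * chebU (m - 2) lam"
    and \<theta>: "exp (- \<i> * \<theta>) = cnj \<eta>"
  shows "H_mat (C_mat m) \<theta> *\<^sub>v vec (2 * m) (C_eigvec m lam \<eta> \<alpha> q)
       = complex_of_real lam \<cdot>\<^sub>v vec (2 * m) (C_eigvec m lam \<eta> \<alpha> q)"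
proof (rule eq_vecI)
  have \<theta>': "exp (\<i> * \<theta>) = \<eta>"
    using cnj_exp_minus_i_times[of \<theta>, unfolded \<theta>] by simp
  have f: "C_eigvec m lam \<eta> \<alpha> q (2 * m) = 0"
    unfolding C_eigvec_def chebU_prev_def using m by simp
  fix i
  assume "i < dim_vec (complex_of_real lam \<cdot>\<^sub>v vec (2 * m) (C_eigvec m lam \<eta> \<alpha> q))"
  then have i: "i < 2 * m" by simp
  show "(H_mat (C_mat m) \<theta> *\<^sub>v vec (2 * m) (C_eigvec m lam \<eta> \<alpha> q)) $ i
      = (complex_of_real lam \<cdot>\<^sub>v vec (2 * m) (C_eigvec m lam \<eta> \<alpha> q)) $ i"
    using H_C_mat_mult_vec_index[where f = "C_eigvec m lam \<eta> \<alpha> q" and \<theta> = \<theta>, OF m f i]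
      C_eigvec_row[OF m \<eta> \<alpha> q rel i] i \<theta> \<theta>'
    by simp
qed (simp add: carrier_matD[OF H_mat_carrier[OF C_mat_carrier]])

lemma C_eigenvector:
  fixes \<eta> \<alpha> q :: complex and lam :: real
  assumes m: "m \<ge> 2"
    and rel: "(2 * lam - 1) * chebU (m - 1) lam = 2 * chebU (m - 2) lam"
    and \<eta>: "cmod \<eta> = 1" and \<alpha>: "\<alpha> * (1 + \<eta>) = 1" and q: "q * (1 + \<eta>) = 1 - cnj \<eta>"
    and \<theta>: "exp (- \<i> * \<theta>) = cnj \<eta>"
  shows "eigenvector (H_mat (C_mat m) \<theta>)
           (vec1 (2 * m) (\<lambda>k. if k \<le> m - 1 then \<eta> ^ (k - 1) * chebU (k - 1) lam
                             else if k \<le> m + 1 then \<eta> ^ (k - 1) * \<alpha> * chebU (m - 1) lam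
                             else \<eta> ^ (k - 1) * q * chebU (2 * m - k) lam))
           lam"
proof -
  have "\<eta> * cnj \<eta> = 1"
    using \<eta> by (metis complex_norm_square of_real_1 power_one)
  moreover have "vec1 (2 * m) (\<lambda>k. if k \<le> m - 1 then \<eta> ^ (k - 1) * chebU (k - 1) lam
        else if k \<le> m + 1 then \<eta> ^ (k - 1) * \<alpha> * chebU (m - 1) lam
        else \<eta> ^ (k - 1) * q * chebU (2 * m - k) lam)
      = vec (2 * m) (C_eigvec m lam \<eta> \<alpha> q)"
    unfolding vec1_def by (rule eq_vecI) (use m in \<open>auto simp: C_eigvec_def chebU_prev_def Suc_diff_Suc\<close>)
  moreover have "vec (2 * m) (C_eigvec m lam \<eta> \<alpha> q) \<noteq> 0\<^sub>v (2 * m)"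
  proof
    assume "vec (2 * m) (C_eigvec m lam \<eta> \<alpha> q) = 0\<^sub>v (2 * m)"
    then have "vec (2 * m) (C_eigvec m lam \<eta> \<alpha> q) $ 0 = 0" using m by simp
    then show False using m by (simp add: C_eigvec_def chebU_prev_def)
  qed
  ultimately show ?thesis
    using H_C_mat_mult_C_eigvec[OF m _ \<alpha> q rel \<theta>] unfolding eigenvector_def
    by (simp add: carrier_matD[OF H_mat_carrier[OF C_mat_carrier]])
qed

theorem mainTheorem18:
  fixes m :: nat and lam :: real
  assumes hm: "m \<ge> 2"
    and root: "P_poly m lam = 0"
    and largest: "\<forall>x. P_poly m x = 0 \<longrightarrow> x \<le> lam"
  defines "U \<equiv> (\<lambda>r. complex_of_real (chebU r lam))"
    and "\<eta> \<equiv> exp (- \<i> * complex_of_real (pi / 4))"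
    and "\<alpha> \<equiv> 1 / (1 + exp (- \<i> * complex_of_real (pi / 4)))"
    and "q \<equiv> (1 - cnj (exp (- \<i> * complex_of_real (pi / 4))))
              / (1 + exp (- \<i> * complex_of_real (pi / 4)))"
    and "\<beta> \<equiv> (1 + \<i>) / 2"
  shows "largest_eigenvalue (H_mat (C_mat m) 0) (complex_of_real lam)
       \<and> largest_eigenvalue (H_mat (C_mat m) (- pi / 4)) (complex_of_real lam)
       \<and> largest_eigenvalue (H_mat (C_mat m) (- pi / 2)) (complex_of_real lam)
       \<and> eigenvector (H_mat (C_mat m) 0)
           (vec1 (2*m) (\<lambda>k. if k \<le> m - 1 then U (k - 1)
                             else if k \<le> m + 1 then U (m - 1) / 2
                             else 0))
           (complex_of_real lam)
       \<and> eigenvector (H_mat (C_mat m) (- pi / 4))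
           (vec1 (2*m) (\<lambda>k. if k \<le> m - 1 then \<eta> ^ (k - 1) * U (k - 1)
                             else if k \<le> m + 1 then \<eta> ^ (k - 1) * \<alpha> * U (m - 1)
                             else \<eta> ^ (k - 1) * q * U (2*m - k)))
           (complex_of_real lam)
       \<and> eigenvector (H_mat (C_mat m) (- pi / 2))
           (vec1 (2*m) (\<lambda>k. if k \<le> m - 1 then (- \<i>) ^ (k - 1) * U (k - 1)
                             else if k \<le> m + 1 then (- \<i>) ^ (k - 1) * \<beta> * U (m - 1)
                             else (- \<i>) ^ (k - 1) * U (2*m - k)))
           (complex_of_real lam)"
proof -
  have lam: "lam \<ge> 1"
    using P_poly_largest_root_ge_1[OF hm largest] .
  have rel: "(2 * lam - 1) * chebU (m - 1) lam = 2 * chebU (m - 2) lam"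
    using root P_poly_eq_0_iff[OF hm] by blast
  have "Re \<eta> > 0" unfolding \<eta>_def by (simp add: Re_exp cos_45)
  then have "1 + \<eta> \<noteq> 0" by (auto simp: add_eq_0_iff)
  have "eigenvector (H_mat (C_mat m) 0) (vec1 (2*m) (\<lambda>k. if k \<le> m - 1 then U (k - 1)
      else if k \<le> m + 1 then U (m - 1) / 2 else 0)) lam"
    using C_eigenvector[OF hm rel, of 1 "1/2" 0 0] unfolding U_def by (simp cong: if_cong)
  moreover have "eigenvector (H_mat (C_mat m) (- pi / 4)) (vec1 (2*m) (\<lambda>k. if k \<le> m - 1
      then \<eta> ^ (k - 1) * U (k - 1) else if k \<le> m + 1 then \<eta> ^ (k - 1) * \<alpha> * U (m - 1)
      else \<eta> ^ (k - 1) * q * U (2*m - k))) lam"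
    unfolding U_def
  proof (rule C_eigenvector[OF hm rel])
    show "cmod \<eta> = 1" "\<alpha> * (1 + \<eta>) = 1" "q * (1 + \<eta>) = 1 - cnj \<eta>"
      unfolding \<alpha>_def q_def \<eta>_def[symmetric] using \<open>1 + \<eta> \<noteq> 0\<close> by (simp_all add: \<eta>_def)
    show "exp (- \<i> * complex_of_real (- pi / 4)) = cnj \<eta>"
      using cnj_exp_minus_i_times[of "pi / 4"] unfolding \<eta>_def by simp
  qed
  moreover have "eigenvector (H_mat (C_mat m) (- pi / 2)) (vec1 (2*m) (\<lambda>k. if k \<le> m - 1
      then (- \<i>) ^ (k - 1) * U (k - 1) else if k \<le> m + 1 then (- \<i>) ^ (k - 1) * \<beta> * U (m - 1)
      else (- \<i>) ^ (k - 1) * U (2*m - k))) lam"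
    using C_eigenvector[OF hm rel, of "- \<i>" \<beta> 1 "- pi / 2"] cis_conv_exp[of "pi / 2"]
    unfolding U_def \<beta>_def by (simp add: field_simps cong: if_cong)
  ultimately show ?thesis
    using largest_eigenvalue_H_C_mat[OF hm lam rel] unfolding eigenvalue_def by blast
qed

end
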